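(* Let $\sigma$ be a finite Borel measure on $(-\pi,\pi)$ with $\sigma\perp\lambda$, and let $\sigma^\#=\sigma((-\pi,\pi))\,\delta_0$ be its symmetrization. Then $u_\sigma^\star(t)\le u_{\sigma^\#}^\star(t)$ for all $t\in[0,2\pi]$.
   Context: $\lambda$ is Lebesgue measure; $\delta_0$ the unit Dirac mass at $0$. $G(x,y)=-\frac{xy}{2\pi}-\frac12|x-y|+\frac{\pi}{2}$ on $[-\pi,\pi]^2$, $u_\mu(x)=\int G(x,y)\,d\mu(y)$. For $g\in L^1[-\pi,\pi]$, the star function is $g^\star(t)=\sup\{\int_E g\,d\lambda: E\subset[-\pi,\pi]\text{ Borel},\ \lambda(E)=t\}$ for $t\in[0,2\pi]$. *)

theory Defs
  imports "HOL-Probability.Probability"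
begin

definition Gk :: "real \<Rightarrow> real \<Rightarrow> real" where
  "Gk x y = - (x * y) / (2 * pi) - \<bar>x - y\<bar> / 2 + pi / 2"

definition upot :: "real measure \<Rightarrow> real \<Rightarrow> real" where
  "upot \<mu> x = (\<integral>y. Gk x y \<partial>\<mu>)"

definition star_fun :: "(real \<Rightarrow> real) \<Rightarrow> real \<Rightarrow> real" where
  "star_fun g t = Sup {(LINT x:E|lborel. g x) | E. E \<in> sets borel \<and> E \<subseteq> {-pi..pi}
                        \<and> emeasure lborel E = ennreal t}"

definition singular_lebesgue :: "real measure \<Rightarrow> bool" where
  "singular_lebesgue \<sigma> \<longleftrightarrow> (\<exists>N \<in> sets borel. emeasure lborel N = 0 \<and> emeasure \<sigma> (UNIV - N) = 0)"

definition symmetrization :: "real measure \<Rightarrow> real measure" where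
  "symmetrization \<sigma> = scale_measure (emeasure \<sigma> {-pi<..<pi}) (return borel 0)"

end

theory Submission
  imports Defs
begin

(* For fixed y in (-pi, pi) the kernel G(., y) is a tent: piecewise linear, with apex
   G(y, y) = (pi^2 - y^2) / (2 pi) at x = y and slopes whose absolute values sum to 1.
   For any level s and any E of measure t,
     int_E G(x, y) dx <= s t + int max 0 (G(x, y) - s) dx,
   with equality when E is the superlevel set {G(., y) >= s}. Choose s = pi/2 - t/4, the level
   whose superlevel set for y = 0 is [-t/2, t/2]. The excess area over s equals
   pi (max 0 (G(y, y) - s))^2 / G(y, y), which increases with the apex height, and the apex is
   highest at y = 0. Hence int_E G(x, y) dx <= int_[-t/2, t/2] G(x, 0) dx for every y, and Fubini
   gives int_E u_sigma <= sigma((-pi, pi)) int_[-t/2, t/2] G(x, 0) dx, which is exactly the star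
   function of u_{sigma#} at t. *)

lemma has_bochner_integral_affine_Icc:
  fixes a b c d y :: real
  assumes "a \<le> b"
  shows "has_bochner_integral lborel (\<lambda>x. indicator {a..b} x * (c + d * (x - y)))
           (c * (b - a) + d * ((b - y)\<^sup>2 - (a - y)\<^sup>2) / 2)"
proof -
  have "integral\<^sup>L lborel (\<lambda>x. indicator {a..b} x *\<^sub>R (c + d * (x - y)))
      = (c * b + d * (b - y)\<^sup>2 / 2) - (c * a + d * (a - y)\<^sup>2 / 2)"
    by (rule integral_FTC_atLeastAtMost[OF assms])
      (auto simp flip: has_real_derivative_iff_has_vector_derivative
        intro!: derivative_eq_intros continuous_intros)
  also have "\<dots> = c * (b - a) + d * ((b - y)\<^sup>2 - (a - y)\<^sup>2) / 2"
    by (simp add: field_simps)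
  moreover have "integrable lborel (\<lambda>x. indicator {a..b} x *\<^sub>R (c + d * (x - y)))"
    by (intro borel_integrable_compact compact_Icc continuous_intros)
  ultimately show ?thesis
    by (simp add: has_bochner_integral_iff)
qed

lemma tent_eq_0:
  fixes k p q x y :: real
  assumes "k \<le> 0" "p > 0" "q > 0"
  shows "max 0 (min (k + p * (x - y)) (k - q * (x - y))) = 0"
proof -
  have "min (k + p * (x - y)) (k - q * (x - y)) \<le> 0"
  proof (cases "x \<le> y")
    case True
    then have "p * (x - y) \<le> 0"
      using assms by (simp add: mult_nonneg_nonpos)
    with assms(1) show ?thesis
      by (simp add: min_le_iff_disj)
  next
    case False
    then have "0 \<le> q * (x - y)"
      using assms by simp
    with assms(1) show ?thesis
      by (simp add: min_le_iff_disj)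
  qed
  then show ?thesis
    by (simp add: max_absorb1)
qed

lemma tent_eq_ramps:
  fixes k p q x y :: real
  assumes "0 \<le> k" "p > 0" "q > 0" "x \<noteq> y"
  shows "max 0 (min (k + p * (x - y)) (k - q * (x - y)))
    = indicator {y - k / p..y} x * (k + p * (x - y))
      + indicator {y..y + k / q} x * (k - q * (x - y))"
proof (cases "x < y")
  case True
  then have "p * (x - y) < 0" "q * (x - y) < 0" "y - k / p \<le> x \<longleftrightarrow> 0 \<le> k + p * (x - y)"
    using assms by (simp_all add: mult_pos_neg field_simps)
  with True show ?thesis
    by (auto simp: indicator_def)
next
  case False
  with assms(4) have "x > y" by simp
  then have "p * (x - y) > 0" "q * (x - y) > 0" "x \<le> y + k / q \<longleftrightarrow> 0 \<le> k - q * (x - y)"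
    using assms by (simp_all add: field_simps)
  with \<open>x > y\<close> show ?thesis
    by (auto simp: indicator_def)
qed

lemma has_bochner_integral_tent:
  fixes k p q y :: real
  assumes p: "p > 0" and q: "q > 0"
  shows "has_bochner_integral lborel (\<lambda>x. max 0 (min (k + p * (x - y)) (k - q * (x - y))))
           ((max 0 k)\<^sup>2 / (2 * p) + (max 0 k)\<^sup>2 / (2 * q))"
proof (cases "k \<le> 0")
  case True
  then show ?thesis
    using tent_eq_0[OF True p q] by (simp add: has_bochner_integral_zero)
next
  case False
  define a where "a = y - k / p"
  define b where "b = y + k / q"
  have "a \<le> y" "y \<le> b"
    using False p q by (simp_all add: a_def b_def)
  have "has_bochner_integral lborel (\<lambda>x. indicator {a..y} x * (k + p * (x - y)))
      (k * (y - a) + p * ((y - y)\<^sup>2 - (a - y)\<^sup>2) / 2)"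
    using \<open>a \<le> y\<close> by (rule has_bochner_integral_affine_Icc)
  moreover have "has_bochner_integral lborel (\<lambda>x. indicator {y..b} x * (k - q * (x - y)))
      (k * (b - y) - q * ((b - y)\<^sup>2 - (y - y)\<^sup>2) / 2)"
    using has_bochner_integral_affine_Icc[OF \<open>y \<le> b\<close>, of k "- q" y] by simp
  moreover have "k * (y - a) + p * ((y - y)\<^sup>2 - (a - y)\<^sup>2) / 2 = k\<^sup>2 / (2 * p)"
    "k * (b - y) - q * ((b - y)\<^sup>2 - (y - y)\<^sup>2) / 2 = k\<^sup>2 / (2 * q)"
    using p q by (simp_all add: a_def b_def power2_eq_square field_simps)
  ultimately have "has_bochner_integral lborel
      (\<lambda>x. indicator {a..y} x * (k + p * (x - y)) + indicator {y..b} x * (k - q * (x - y)))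
      (k\<^sup>2 / (2 * p) + k\<^sup>2 / (2 * q))"
    by (intro has_bochner_integral_add) simp_all
  moreover have "AE x in lborel.
      indicator {a..y} x * (k + p * (x - y)) + indicator {y..b} x * (k - q * (x - y))
      = max 0 (min (k + p * (x - y)) (k - q * (x - y)))"
    using AE_lborel_singleton[of y]
    by eventually_elim (use False p q in \<open>simp add: a_def b_def tent_eq_ramps\<close>)
  ultimately show ?thesis
    using False by (subst has_bochner_integral_cong_AE[symmetric]) simp_all
qed

lemma excess_ratio_mono:
  fixes s h H :: real
  assumes "0 \<le> s" "0 < h" "h \<le> H"
  shows "(max 0 (h - s))\<^sup>2 / h \<le> (max 0 (H - s))\<^sup>2 / H"
proof (cases "s \<le> h")
  case True
  have "s * s \<le> h * H"
    using assms True by (intro mult_mono) auto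
  then have "0 \<le> (H - h) * (h * H - s * s)"
    using assms by simp
  also have "(H - h) * (h * H - s * s) = (H - s)\<^sup>2 * h - (h - s)\<^sup>2 * H"
    by (simp add: power2_eq_square algebra_simps)
  finally have "(h - s)\<^sup>2 * H \<le> (H - s)\<^sup>2 * h"
    by simp
  moreover have "max 0 (h - s) = h - s" "max 0 (H - s) = H - s"
    using True assms by simp_all
  ultimately show ?thesis
    using assms by (simp add: divide_simps)
qed (use assms in simp)

lemma set_integral_le_level_plus_excess:
  fixes f :: "'a \<Rightarrow> real"
  assumes "set_integrable M E f" "E \<in> sets M" "emeasure M E < \<infinity>"
    and "integrable M (\<lambda>x. max 0 (f x - s))"
  shows "(LINT x:E|M. f x) \<le> s * measure M E + (\<integral>x. max 0 (f x - s) \<partial>M)"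
proof -
  have "(LINT x:E|M. f x) \<le> (\<integral>x. s * indicator E x + max 0 (f x - s) \<partial>M)"
    unfolding set_lebesgue_integral_def
    using assms by (intro integral_mono) (auto simp: set_integrable_def split: split_indicator)
  also have "\<dots> = s * measure M E + (\<integral>x. max 0 (f x - s) \<partial>M)"
    using assms by simp
  finally show ?thesis .
qed

lemma set_integral_eq_level_plus_excess:
  fixes f :: "'a \<Rightarrow> real"
  assumes "E \<in> sets M" "emeasure M E < \<infinity>" "\<And>x. x \<in> space M \<Longrightarrow> x \<in> E \<longleftrightarrow> s \<le> f x"
    and "integrable M (\<lambda>x. max 0 (f x - s))"
  shows "(LINT x:E|M. f x) = s * measure M E + (\<integral>x. max 0 (f x - s) \<partial>M)"
proof -
  have "(LINT x:E|M. f x) = (\<integral>x. s * indicator E x + max 0 (f x - s) \<partial>M)"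
    unfolding set_lebesgue_integral_def
    by (intro Bochner_Integration.integral_cong) (use assms(3) in \<open>auto simp: indicator_def\<close>)
  also have "\<dots> = s * measure M E + (\<integral>x. max 0 (f x - s) \<partial>M)"
    using assms by simp
  finally show ?thesis .
qed

lemma Gk_diag: "Gk y y = (pi\<^sup>2 - y\<^sup>2) / (2 * pi)"
  by (simp add: Gk_def field_simps power2_eq_square)

lemma Gk_diag_pos: "\<bar>y\<bar> < pi \<Longrightarrow> 0 < Gk y y"
  using power_strict_mono[of "\<bar>y\<bar>" pi 2] by (simp add: Gk_diag)

lemma Gk_diag_le: "Gk y y \<le> Gk 0 0"
  using zero_le_power2[of y] by (simp add: Gk_diag field_simps power2_eq_square)

lemma Gk_tent:
  "Gk x y = min (Gk y y + (pi - y) / (2 * pi) * (x - y)) (Gk y y - (pi + y) / (2 * pi) * (x - y))"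
  by (cases "x \<le> y") (auto simp: Gk_def min_def field_simps)

lemma has_bochner_integral_Gk_excess:
  assumes "\<bar>y\<bar> < pi"
  shows "has_bochner_integral lborel (\<lambda>x. max 0 (Gk x y - s))
           ((max 0 (Gk y y - s))\<^sup>2 * pi / Gk y y)"
proof -
  define p where "p = (pi - y) / (2 * pi)"
  define q where "q = (pi + y) / (2 * pi)"
  define k where "k = Gk y y - s"
  have "p > 0" "q > 0" "pi - y \<noteq> 0" "pi + y \<noteq> 0"
    using assms by (auto simp: p_def q_def)
  have "1 / (2 * p) + 1 / (2 * q) = pi / (pi - y) + pi / (pi + y)"
    unfolding p_def q_def
    by (simp only: times_divide_eq_right mult_divide_mult_cancel_left_if divide_divide_eq_right)
      simp
  also have "\<dots> = (pi * (pi + y) + pi * (pi - y)) / ((pi - y) * (pi + y))"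
    using \<open>pi - y \<noteq> 0\<close> \<open>pi + y \<noteq> 0\<close> by (rule add_frac_eq)
  also have "\<dots> = pi / Gk y y"
    by (simp add: Gk_diag power2_eq_square algebra_simps)
  finally have "(max 0 k)\<^sup>2 / (2 * p) + (max 0 k)\<^sup>2 / (2 * q) = (max 0 k)\<^sup>2 * pi / Gk y y"
    by (metis add_divide_distrib distrib_left times_divide_eq_right mult.right_neutral)
  moreover have "Gk x y - s = min (k + p * (x - y)) (k - q * (x - y))" for x
    using Gk_tent[of x y] by (simp add: k_def p_def q_def)
  ultimately show ?thesis
    unfolding k_def[symmetric] using has_bochner_integral_tent[OF \<open>p > 0\<close> \<open>q > 0\<close>, of k y] by simp
qed

lemma set_integrable_Gk:
  assumes "E \<in> sets borel" "E \<subseteq> {-pi..pi}"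
  shows "set_integrable lborel E (\<lambda>x. Gk x y)"
proof (rule set_integrable_subset)
  show "set_integrable lborel {-pi..pi} (\<lambda>x. Gk x y)"
    unfolding set_integrable_def Gk_def
    by (intro borel_integrable_compact compact_Icc continuous_intros) auto
qed (use assms in auto)

lemma set_integral_Gk_le_centered:
  assumes y: "\<bar>y\<bar> < pi" and E: "E \<in> sets borel" "E \<subseteq> {-pi..pi}"
    and Et: "emeasure lborel E = ennreal t" and t: "0 \<le> t" "t \<le> 2 * pi"
  shows "(LINT x:E|lborel. Gk x y) \<le> (LINT x:{-t/2..t/2}|lborel. Gk x 0)"
proof -
  define s where "s = pi / 2 - t / 4"
  have "0 \<le> s"
    using t by (simp add: s_def)
  note excess_y = has_bochner_integral_Gk_excess[OF y, of s]
  have superlevel: "x \<in> {-t/2..t/2} \<longleftrightarrow> s \<le> Gk x 0" for x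
    by (auto simp: s_def Gk_def)
  note excess_0 = has_bochner_integral_Gk_excess[of 0 s, simplified]
  have "(LINT x:E|lborel. Gk x y) \<le> s * t + (max 0 (Gk y y - s))\<^sup>2 * pi / Gk y y"
    using set_integral_le_level_plus_excess[OF set_integrable_Gk[OF E, of y], where s = s]
      E Et t excess_y
    by (simp add: has_bochner_integral_iff measure_def)
  also have "(max 0 (Gk y y - s))\<^sup>2 * pi / Gk y y \<le> (max 0 (Gk 0 0 - s))\<^sup>2 * pi / Gk 0 0"
    using mult_right_mono[OF excess_ratio_mono[OF \<open>0 \<le> s\<close> Gk_diag_pos[OF y] Gk_diag_le] pi_ge_zero]
    by (simp only: times_divide_eq_left)
  also have "s * t + (max 0 (Gk 0 0 - s))\<^sup>2 * pi / Gk 0 0 = (LINT x:{-t/2..t/2}|lborel. Gk x 0)"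
    using set_integral_eq_level_plus_excess[of "{-t/2..t/2}" lborel s "\<lambda>x. Gk x 0"]
      superlevel excess_0 t
    by (simp add: has_bochner_integral_iff)
  finally show ?thesis
    by simp
qed

lemma abs_Gk_le:
  assumes "\<bar>x\<bar> \<le> pi" "\<bar>y\<bar> \<le> pi"
  shows "\<bar>Gk x y\<bar> \<le> 2 * pi"
proof -
  define a where "a = x * y / (2 * pi)"
  define d where "d = \<bar>x - y\<bar>"
  have "\<bar>x * y\<bar> \<le> pi * pi"
    unfolding abs_mult using assms by (intro mult_mono) auto
  then have "\<bar>a\<bar> \<le> pi / 2"
    by (simp add: a_def field_simps)
  moreover have "0 \<le> d" "d \<le> 2 * pi"
    using assms unfolding d_def by linarith+
  moreover have "Gk x y = - a - d / 2 + pi / 2"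
    by (simp add: Gk_def a_def d_def)
  ultimately show ?thesis
    using abs_ge_self[of a] abs_ge_minus_self[of a] pi_gt_zero by (intro abs_leI) linarith+
qed

lemma borel_measurable_Gk [measurable]: "case_prod Gk \<in> borel_measurable (borel \<Otimes>\<^sub>M borel)"
  unfolding Gk_def split_beta' by measurable

lemma integrable_pair_bounded_strip:
  fixes f :: "'a \<Rightarrow> 'b \<Rightarrow> real"
  assumes "sigma_finite_measure M" "finite_measure N" "E \<in> sets M" "emeasure M E < \<infinity>"
    and "case_prod f \<in> borel_measurable (M \<Otimes>\<^sub>M N)"
    and bound: "\<And>x y. y \<in> space N \<Longrightarrow> \<bar>f x y\<bar> \<le> C * indicator E x"
  shows "integrable (M \<Otimes>\<^sub>M N) (case_prod f)"
proof -
  interpret N: finite_measure N by fact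
  have "integrable (M \<Otimes>\<^sub>M N) (\<lambda>z. C * indicator (E \<times> space N) z)"
    using assms(3,4) by (intro integrable_mult_right integrable_real_indicator)
      (simp_all add: N.emeasure_pair_measure_Times ennreal_mult_eq_top_iff less_top[symmetric]
        N.emeasure_finite)
  then show ?thesis
  proof (rule Bochner_Integration.integrable_bound)
    show "AE z in M \<Otimes>\<^sub>M N. norm (case_prod f z) \<le> norm (C * indicator (E \<times> space N) z)"
    proof (rule AE_I2, clarify)
      fix x y assume "(x, y) \<in> space (M \<Otimes>\<^sub>M N)"
      then have "\<bar>f x y\<bar> \<le> C * indicator E x"
        by (intro bound) (simp add: space_pair_measure)
      then show "norm (f x y) \<le> norm (C * indicator (E \<times> space N) (x, y))"
        using \<open>(x, y) \<in> space (M \<Otimes>\<^sub>M N)\<close> by (auto simp: space_pair_measure indicator_def)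
    qed
  qed fact
qed

lemma integral_indicator_mult_AE:
  fixes g :: "'a \<Rightarrow> real"
  assumes "S \<in> sets M" "AE y in M. y \<in> S" "g \<in> borel_measurable M"
  shows "(\<integral>y. indicator S y * g y \<partial>M) = (\<integral>y. g y \<partial>M)"
  using assms by (intro integral_cong_AE) auto

lemma set_integral_integral_le:
  fixes K :: "'a \<Rightarrow> 'b \<Rightarrow> real"
  assumes "sigma_finite_measure M" "finite_measure \<mu>"
    and E: "E \<in> sets M" "emeasure M E < \<infinity>"
    and S: "S \<in> sets \<mu>" "AE y in \<mu>. y \<in> S"
    and K: "case_prod K \<in> borel_measurable (M \<Otimes>\<^sub>M \<mu>)"
    and bounded: "\<And>x y. x \<in> E \<Longrightarrow> y \<in> S \<Longrightarrow> \<bar>K x y\<bar> \<le> C"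
    and le: "\<And>y. y \<in> S \<Longrightarrow> (LINT x:E|M. K x y) \<le> B"
  shows "(LINT x:E|M. \<integral>y. K x y \<partial>\<mu>) \<le> measure \<mu> S * B"
proof -
  interpret \<mu>: finite_measure \<mu> by fact
  interpret pair_sigma_finite M \<mu>
    using assms(1) by (simp add: pair_sigma_finite_def \<mu>.sigma_finite_measure_axioms)
  define f where "f = (\<lambda>x y. indicator E x * indicator S y * K x y)"
  have [measurable]: "E \<in> sets M" "S \<in> sets \<mu>" "case_prod K \<in> borel_measurable (M \<Otimes>\<^sub>M \<mu>)"
    using E S K by auto
  have f: "integrable (M \<Otimes>\<^sub>M \<mu>) (case_prod f)"
  proof (rule integrable_pair_bounded_strip[OF assms(1,2) E])
    show "case_prod f \<in> borel_measurable (M \<Otimes>\<^sub>M \<mu>)"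
      unfolding f_def by measurable
    show "\<bar>f x y\<bar> \<le> \<bar>C\<bar> * indicator E x" for x y
      using bounded[of x y] by (auto simp: f_def indicator_def)
  qed
  have inner: "(\<integral>y. f x y \<partial>\<mu>) = indicator E x * (\<integral>y. K x y \<partial>\<mu>)" if "x \<in> space M" for x
    using integral_indicator_mult_AE[OF S measurable_Pair2[OF K that]]
    by (simp add: f_def mult.assoc)
  have "(LINT x:E|M. \<integral>y. K x y \<partial>\<mu>) = (\<integral>x. \<integral>y. f x y \<partial>\<mu> \<partial>M)"
    unfolding set_lebesgue_integral_def
    by (intro Bochner_Integration.integral_cong) (simp_all add: inner)
  also have "\<dots> = (\<integral>y. \<integral>x. f x y \<partial>M \<partial>\<mu>)"
    using Fubini_integral[OF f] by simp
  also have "\<dots> \<le> (\<integral>y. indicator S y * B \<partial>\<mu>)"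
  proof (intro integral_mono)
    show "integrable \<mu> (\<lambda>y. \<integral>x. f x y \<partial>M)"
      using f by (rule integrable_snd)
    show "integrable \<mu> (\<lambda>y. indicator S y * B)"
      by (intro integrable_mult_left integrable_real_indicator) (auto simp: less_top[symmetric])
    show "(\<integral>x. f x y \<partial>M) \<le> indicator S y * B" for y
      using le[of y] by (cases "y \<in> S") (simp_all add: f_def set_lebesgue_integral_def mult.commute)
  qed
  also have "\<dots> = measure \<mu> S * B"
    by simp
  finally show ?thesis .
qed

lemma set_integral_upot_le_centered:
  assumes sets: "sets \<mu> = sets borel" and "finite_measure \<mu>"
    and null: "emeasure \<mu> (UNIV - {-pi<..<pi}) = 0"
    and E: "E \<in> sets borel" "E \<subseteq> {-pi..pi}" and Et: "emeasure lborel E = ennreal t"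
    and t: "0 \<le> t" "t \<le> 2 * pi"
  shows "(LINT x:E|lborel. upot \<mu> x)
    \<le> measure \<mu> {-pi<..<pi} * (LINT x:{-t/2..t/2}|lborel. Gk x 0)"
  unfolding upot_def
proof (rule set_integral_integral_le[where C = "2 * pi"])
  have "UNIV - {-pi<..<pi} \<in> null_sets \<mu>"
    using null sets by (simp add: null_sets_def)
  then show "AE y in \<mu>. y \<in> {-pi<..<pi}"
    by (rule AE_I') auto
  have sets_pair: "sets (lborel \<Otimes>\<^sub>M \<mu>) = sets (borel \<Otimes>\<^sub>M borel)"
    using sets by (intro sets_pair_measure_cong) simp_all
  show "case_prod Gk \<in> borel_measurable (lborel \<Otimes>\<^sub>M \<mu>)"
    unfolding measurable_cong_sets[OF sets_pair refl] by (rule borel_measurable_Gk)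
  show "\<bar>Gk x y\<bar> \<le> 2 * pi" if "x \<in> E" "y \<in> {-pi<..<pi}" for x y
    using that subsetD[OF E(2) that(1)] by (intro abs_Gk_le) auto
  show "(LINT x:E|lborel. Gk x y) \<le> (LINT x:{-t/2..t/2}|lborel. Gk x 0)"
    if "y \<in> {-pi<..<pi}" for y
    using that by (intro set_integral_Gk_le_centered[OF _ E Et t]) auto
qed (use assms sigma_finite_lborel in \<open>auto simp: less_top[symmetric]\<close>)

lemma star_fun_le:
  assumes t: "0 \<le> t" "t \<le> 2 * pi"
    and le: "\<And>E. E \<in> sets borel \<Longrightarrow> E \<subseteq> {-pi..pi} \<Longrightarrow> emeasure lborel E = ennreal t \<Longrightarrow>
      (LINT x:E|lborel. g x) \<le> c"
  shows "star_fun g t \<le> c"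
  unfolding star_fun_def
proof (rule cSup_least, goal_cases nonempty)
  case nonempty
  have "{-pi..-pi + t} \<in> sets borel" "{-pi..-pi + t} \<subseteq> {-pi..pi}"
    "emeasure lborel {-pi..-pi + t} = ennreal t"
    using t by auto
  then show ?case
    by blast
qed (use le in auto)

lemma star_fun_eqI:
  assumes "E \<in> sets borel" "E \<subseteq> {-pi..pi}" "emeasure lborel E = ennreal t"
    and "(LINT x:E|lborel. g x) = c"
    and "\<And>E. E \<in> sets borel \<Longrightarrow> E \<subseteq> {-pi..pi} \<Longrightarrow> emeasure lborel E = ennreal t \<Longrightarrow>
      (LINT x:E|lborel. g x) \<le> c"
  shows "star_fun g t = c"
  unfolding star_fun_def
proof (rule cSup_eq_maximum, goal_cases attained)
  case attained
  show ?case
    using assms(1-4) by (intro CollectI exI[of _ E]) simp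
qed (use assms(5) in auto)

lemma star_fun_upot_le:
  assumes "sets \<mu> = sets borel" "finite_measure \<mu>" "emeasure \<mu> (UNIV - {-pi<..<pi}) = 0"
    and "0 \<le> t" "t \<le> 2 * pi"
  shows "star_fun (upot \<mu>) t \<le> measure \<mu> {-pi<..<pi} * (LINT x:{-t/2..t/2}|lborel. Gk x 0)"
  using assms by (intro star_fun_le set_integral_upot_le_centered)

lemma integral_scale_measure:
  fixes f :: "'a \<Rightarrow> real"
  assumes "0 \<le> c" "f \<in> borel_measurable M"
  shows "(\<integral>x. f x \<partial>scale_measure (ennreal c) M) = c * (\<integral>x. f x \<partial>M)"
proof -
  have "scale_measure (ennreal c) M = density M (\<lambda>_. ennreal c)"
    by (rule measure_eqI) (simp_all add: emeasure_density_const)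
  then show ?thesis
    using assms by (simp add: integral_density)
qed

lemma upot_symmetrization:
  assumes "emeasure \<sigma> {-pi<..<pi} \<noteq> \<infinity>"
  shows "upot (symmetrization \<sigma>) x = measure \<sigma> {-pi<..<pi} * Gk x 0"
proof -
  have [measurable]: "(\<lambda>y. Gk x y) \<in> borel_measurable borel"
    unfolding Gk_def by measurable
  have "symmetrization \<sigma> = scale_measure (ennreal (measure \<sigma> {-pi<..<pi})) (return borel 0)"
    using assms by (simp add: symmetrization_def emeasure_eq_ennreal_measure)
  then show ?thesis
    by (simp add: upot_def integral_scale_measure integral_return)
qed

lemma star_fun_upot_symmetrization:
  assumes "emeasure \<sigma> {-pi<..<pi} \<noteq> \<infinity>" and t: "0 \<le> t" "t \<le> 2 * pi"
  shows "star_fun (upot (symmetrization \<sigma>)) t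
    = measure \<sigma> {-pi<..<pi} * (LINT x:{-t/2..t/2}|lborel. Gk x 0)"
  unfolding upot_symmetrization[OF assms(1)]
proof (rule star_fun_eqI)
  show "{-t/2..t/2} \<in> sets borel" "{-t/2..t/2} \<subseteq> {-pi..pi}"
    "emeasure lborel {-t/2..t/2} = ennreal t"
    using t by auto
  show "(LINT x:E|lborel. measure \<sigma> {-pi<..<pi} * Gk x 0)
      \<le> measure \<sigma> {-pi<..<pi} * (LINT x:{-t/2..t/2}|lborel. Gk x 0)"
    if "E \<in> sets borel" "E \<subseteq> {-pi..pi}" "emeasure lborel E = ennreal t" for E
    using set_integral_Gk_le_centered[of 0, OF _ that t] by (simp add: mult_left_mono)
qed simp

theorem lemma5p6:
  fixes \<sigma> :: "real measure" and t :: real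
  assumes "sets \<sigma> = sets borel"
    and "finite_measure \<sigma>"
    and "emeasure \<sigma> (UNIV - {-pi<..<pi}) = 0"
    and "singular_lebesgue \<sigma>"
    and "t \<in> {0..2*pi}"
  shows "star_fun (upot \<sigma>) t \<le> star_fun (upot (symmetrization \<sigma>)) t"
proof -
  have t: "0 \<le> t" "t \<le> 2 * pi"
    using assms(5) by auto
  have finite: "emeasure \<sigma> {-pi<..<pi} \<noteq> \<infinity>"
    using assms(2) by (simp add: finite_measure.emeasure_finite)
  have "star_fun (upot \<sigma>) t \<le> measure \<sigma> {-pi<..<pi} * (LINT x:{-t/2..t/2}|lborel. Gk x 0)"
    using assms(1-3) t by (rule star_fun_upot_le)
  also have "\<dots> = star_fun (upot (symmetrization \<sigma>)) t"
    using star_fun_upot_symmetrization[OF finite t] by simp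
  finally show ?thesis .
qed

end
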